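(* For every integer $t\ge 2$ and every positive integer $d$, \[ g\Big(1+\frac{d}{t},t\Big)\le \frac{(2d+1)t+d^2}{(t+d)(2d+1)} = 1-\frac{d^2+d}{(t+d)(2d+1)}. \]
   Context: Let $\mathbb{F}$ be a finite field and $x_1,\dots,x_p$ a basis of $\mathbb{F}^p$. A $[t\times m,p]$ array code is a $t\times m$ array whose entries (cells) are linear combinations of $x_1,\dots,x_p$; its columns are called servers. It has the $k$-PIR property (is a $[t\times m,p]$ $k$-PIR array code) if for every $i\in\{1,\dots,p\}$ there exist $k$ pairwise disjoint sets $S_1,\dots,S_k$ of columns such that for every $j$ the vector $x_i$ lies in the linear span of all entries of the columns in $S_j$. Its PIR rate is $k/m$. For a rational $s>1$ and a positive integer $t$ with $st$ an integer, $g(s,t)$ is the largest PIR rate $k/m$ of a $[t\times m,st]$ $k$-PIR array code (over all finite fields, all $m$ and all $k$). *)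

theory Defs
  imports Complex_Main
begin

text \<open>A [t x m, p] array code over a field 'a: cell (r,c) with r < t, c < m holds the
  linear combination  sum_{l<p} C r c l * x_l  of the basis vectors x_0,...,x_{p-1}
  (basis vectors indexed from 0 instead of 1); C r c is its coefficient vector.\<close>

definition in_col_span ::
  "(nat \<Rightarrow> nat \<Rightarrow> nat \<Rightarrow> 'a::field) \<Rightarrow> nat \<Rightarrow> nat \<Rightarrow> nat set \<Rightarrow> nat \<Rightarrow> bool" where
  "in_col_span C t p S i \<longleftrightarrow>
     (\<exists>coef::nat \<Rightarrow> nat \<Rightarrow> 'a. \<forall>l<p.
        (\<Sum>c\<in>S. \<Sum>r<t. coef r c * C r c l) = (if l = i then 1 else 0))"

definition is_pir_array_code ::
  "(nat \<Rightarrow> nat \<Rightarrow> nat \<Rightarrow> 'a::field) \<Rightarrow> nat \<Rightarrow> nat \<Rightarrow> nat \<Rightarrow> nat \<Rightarrow> bool" where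
  "is_pir_array_code C t m p k \<longleftrightarrow>
     (\<forall>i<p. \<exists>S::nat \<Rightarrow> nat set.
        (\<forall>j<k. S j \<subseteq> {..<m}) \<and>
        (\<forall>j<k. \<forall>j'<k. j \<noteq> j' \<longrightarrow> S j \<inter> S j' = {}) \<and>
        (\<forall>j<k. in_col_span C t p (S j) i))"

definition pir_g :: "'a::{finite,field} itself \<Rightarrow> rat \<Rightarrow> nat \<Rightarrow> real" where
  "pir_g _ s t = Sup {real k / real m | k m (C :: nat \<Rightarrow> nat \<Rightarrow> nat \<Rightarrow> 'a).
      0 < m \<and> 0 < k \<and> is_pir_array_code C t m (nat \<lfloor>s * of_nat t\<rfloor>) k}"

end

theory Submission
  imports Defs "HOL-Library.Function_Algebras"
begin

text \<open>
  Put p = t + d and let R c be the set of indices i such that x_i is recoverable from column c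
  alone. The t cells of a column span a space of dimension at most t, so |R c| \<le> t, and if
  |R c| = t then column c spans exactly the coordinate space of R c. Hence two such "full"
  columns can never together recover an x_i that neither recovers alone.

  Give column c the weight 1 on i \<in> R c, weight q = d/(2d+1) on the other i if c is full and
  weight 1 - q otherwise. Every recovering set of x_i then has total weight at least 1: either
  one column recovers x_i alone, or the set has at least three columns (and 3q \<ge> 1), or it
  consists of two columns of which at most one is full (and q + (1 - q) = 1). On the other hand
  each column carries total weight at most t + dq. Counting the weight over all i in two ways
  gives k (t + d) \<le> m (t + dq), which is the claimed bound on k/m.
\<close>

lemma (in vector_space) card_ge_span_independent:
  assumes "finite A" "independent B" "B \<subseteq> span A" "card A \<le> card B"
  shows "span A \<subseteq> span B"
proof
  fix a assume a: "a \<in> span A"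
  show "a \<in> span B"
  proof (rule ccontr)
    assume a_notin: "a \<notin> span B"
    have "independent (insert a B)" by (rule independent_insertI[OF a_notin assms(2)])
    then have "card (insert a B) \<le> card A"
      using independent_span_bound[OF assms(1)] a assms(3) by simp
    moreover have "finite B" "a \<notin> B"
      using independent_span_bound[OF assms(1-3)] a_notin span_base by auto
    ultimately show False using assms(4) by simp
  qed
qed

definition coord_scale :: "'a::field \<Rightarrow> (nat \<Rightarrow> 'a) \<Rightarrow> nat \<Rightarrow> 'a" where
  "coord_scale a v = (\<lambda>l. a * v l)"

interpretation coords: vector_space coord_scale
  by unfold_locales (auto simp: coord_scale_def fun_eq_iff algebra_simps)

lemma sum_apply: "(\<Sum>x\<in>A. f x) l = (\<Sum>x\<in>A. f x l)"
  by (induction A rule: infinite_finite_induct) auto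

definition unit_vec :: "nat \<Rightarrow> nat \<Rightarrow> 'a::field" where
  "unit_vec i = (\<lambda>l. if l = i then 1 else 0)"

type_synonym 'a array_code = "nat \<Rightarrow> nat \<Rightarrow> nat \<Rightarrow> 'a"

text \<open>Cells are truncated to the coordinates l < p, which are the only ones
  in_col_span looks at.\<close>

definition cell_vec :: "'a::field array_code \<Rightarrow> nat \<Rightarrow> nat \<Rightarrow> nat \<Rightarrow> nat \<Rightarrow> 'a" where
  "cell_vec C p c r = (\<lambda>l. if l < p then C r c l else 0)"

definition column_vectors ::
  "'a::field array_code \<Rightarrow> nat \<Rightarrow> nat \<Rightarrow> nat set \<Rightarrow> (nat \<Rightarrow> 'a) set" where
  "column_vectors C t p S = (\<lambda>(c, r). cell_vec C p c r) ` (S \<times> {..<t})"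

lemma inj_unit_vec: "inj unit_vec"
  by (auto simp: inj_def unit_vec_def fun_eq_iff)

lemma independent_unit_vecs:
  assumes "finite A"
  shows "coords.independent (unit_vec ` A :: (nat \<Rightarrow> 'a::field) set)"
proof (rule coords.independent_if_scalars_zero)
  show "finite (unit_vec ` A)" using assms by simp
next
  fix f :: "(nat \<Rightarrow> 'a) \<Rightarrow> 'a" and v :: "nat \<Rightarrow> 'a"
  assume zero: "(\<Sum>v\<in>unit_vec ` A. coord_scale (f v) v) = 0" and "v \<in> unit_vec ` A"
  then obtain i where i: "i \<in> A" "v = unit_vec i" by auto
  have "0 = (\<Sum>j\<in>A. f (unit_vec j) * (unit_vec j i :: 'a))"
    using fun_cong[OF zero, of i]
    by (simp add: sum_apply sum.reindex inj_on_subset[OF inj_unit_vec] coord_scale_def)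
  also have "\<dots> = f v"
    using assms i by (simp add: unit_vec_def if_distrib cong: if_cong)
  finally show "f v = 0" by simp
qed

lemma unit_vec_in_span_column_vectors:
  assumes "in_col_span C t p S i" "i < p"
  shows "unit_vec i \<in> coords.span (column_vectors C t p S)"
proof -
  obtain coef where coef: "\<forall>l<p. (\<Sum>c\<in>S. \<Sum>r<t. coef r c * C r c l) = (if l = i then 1 else 0)"
    using assms(1) unfolding in_col_span_def by blast
  have "unit_vec i = (\<Sum>c\<in>S. \<Sum>r<t. coord_scale (coef r c) (cell_vec C p c r))"
  proof
    fix l
    show "unit_vec i l = (\<Sum>c\<in>S. \<Sum>r<t. coord_scale (coef r c) (cell_vec C p c r)) l"
      using coef assms(2) by (cases "l < p") (auto simp: sum_apply unit_vec_def coord_scale_def cell_vec_def)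
  qed
  also have "\<dots> \<in> coords.span (column_vectors C t p S)"
    by (intro coords.span_sum coords.span_scale coords.span_base) (auto simp: column_vectors_def)
  finally show ?thesis .
qed

lemma not_in_col_span_empty: "i < p \<Longrightarrow> \<not> in_col_span C t p {} i"
  by (auto simp: in_col_span_def)

lemma vanishes_off_span_unit_vecs:
  assumes "v \<in> coords.span (unit_vec ` A)" "l \<notin> A"
  shows "v l = 0"
proof -
  have "coords.span (unit_vec ` A) \<subseteq> {v. \<forall>l. l \<notin> A \<longrightarrow> v l = 0}"
    by (rule coords.span_minimal) (auto simp: unit_vec_def coords.subspace_def coord_scale_def)
  with assms show ?thesis by blast
qed

lemma finite_column_vectors: "finite S \<Longrightarrow> finite (column_vectors C t p S)"
  by (simp add: column_vectors_def)

lemma card_column_vectors_le: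
  assumes "finite S"
  shows "card (column_vectors C t p S) \<le> card S * t"
proof -
  have "card (column_vectors C t p S) \<le> card (S \<times> {..<t})"
    unfolding column_vectors_def using assms by (intro card_image_le) simp
  then show ?thesis by (simp add: card_cartesian_product)
qed

definition column_recoverable :: "'a::field array_code \<Rightarrow> nat \<Rightarrow> nat \<Rightarrow> nat \<Rightarrow> nat set" where
  "column_recoverable C t p c = {i. i < p \<and> in_col_span C t p {c} i}"

lemma finite_column_recoverable: "finite (column_recoverable C t p c)"
  by (rule finite_subset[of _ "{..<p}"]) (auto simp: column_recoverable_def)

lemma unit_vecs_column_recoverable_in_span:
  "unit_vec ` column_recoverable C t p c \<subseteq> coords.span (column_vectors C t p {c})"
  by (auto simp: column_recoverable_def intro: unit_vec_in_span_column_vectors)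

lemma card_column_recoverable_le:
  fixes C :: "'a::field array_code"
  shows "card (column_recoverable C t p c) \<le> t"
proof -
  let ?R = "column_recoverable C t p c"
  have "card (unit_vec ` ?R :: (nat \<Rightarrow> 'a) set) \<le> card (column_vectors C t p {c})"
    using coords.independent_span_bound[OF finite_column_vectors[of "{c}" C t p]
        independent_unit_vecs[OF finite_column_recoverable] unit_vecs_column_recoverable_in_span]
    by simp
  then show ?thesis
    using card_column_vectors_le[of "{c}" C t p] by (simp add: card_image inj_on_subset[OF inj_unit_vec])
qed

lemma recoverable_by_one_column:
  assumes "finite S" "card S \<le> 1" "in_col_span C t p S i" "i < p"
  shows "\<exists>c\<in>S. i \<in> column_recoverable C t p c"
proof -
  have "S = {} \<or> (\<exists>c. S = {c})"
    using assms(1,2) card_1_singleton_iff by (auto simp: le_Suc_eq)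
  then show ?thesis
    using assms(3,4) not_in_col_span_empty[of i p C t] by (auto simp: column_recoverable_def)
qed

lemma span_full_column:
  fixes C :: "'a::field array_code"
  assumes "card (column_recoverable C t p c) = t"
  shows "coords.span (column_vectors C t p {c}) \<subseteq> coords.span (unit_vec ` column_recoverable C t p c)"
proof (rule coords.card_ge_span_independent)
  let ?R = "column_recoverable C t p c"
  show "finite (column_vectors C t p {c})" by (rule finite_column_vectors) simp
  show "coords.independent (unit_vec ` ?R :: (nat \<Rightarrow> 'a) set)"
    by (rule independent_unit_vecs[OF finite_column_recoverable])
  show "unit_vec ` ?R \<subseteq> coords.span (column_vectors C t p {c})"
    by (rule unit_vecs_column_recoverable_in_span)
  show "card (column_vectors C t p {c}) \<le> card (unit_vec ` ?R :: (nat \<Rightarrow> 'a) set)"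
    using card_column_vectors_le[of "{c}" C t p] assms
    by (simp add: card_image inj_on_subset[OF inj_unit_vec])
qed

lemma not_in_col_span_two_full_columns:
  fixes C :: "'a::field array_code"
  assumes "card (column_recoverable C t p c) = t" "card (column_recoverable C t p c') = t"
    and "i \<notin> column_recoverable C t p c" "i \<notin> column_recoverable C t p c'" "i < p"
  shows "\<not> in_col_span C t p {c, c'} i"
proof
  let ?U = "column_recoverable C t p c \<union> column_recoverable C t p c'"
  assume "in_col_span C t p {c, c'} i"
  then have i_in: "unit_vec i \<in> coords.span (column_vectors C t p {c, c'})"
    using assms(5) by (rule unit_vec_in_span_column_vectors)
  have "column_vectors C t p {c, c'} = column_vectors C t p {c} \<union> column_vectors C t p {c'}"
    by (auto simp: column_vectors_def)
  moreover have "column_vectors C t p {x} \<subseteq> coords.span (unit_vec ` ?U)"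
    if "x \<in> {c, c'}" for x
  proof -
    have "column_vectors C t p {x} \<subseteq> coords.span (column_vectors C t p {x})"
      by (rule coords.span_superset)
    also have "\<dots> \<subseteq> coords.span (unit_vec ` column_recoverable C t p x)"
      using that assms(1,2) span_full_column by blast
    also have "\<dots> \<subseteq> coords.span (unit_vec ` ?U)"
      using that by (intro coords.span_mono) auto
    finally show ?thesis .
  qed
  ultimately have span_sub: "coords.span (column_vectors C t p {c, c'}) \<subseteq> coords.span (unit_vec ` ?U)"
    by (intro coords.span_minimal coords.subspace_span) auto
  have "(unit_vec i :: nat \<Rightarrow> 'a) \<in> coords.span (unit_vec ` ?U)"
    using span_sub i_in by (rule subsetD)
  moreover have "i \<notin> ?U" using assms(3,4) by simp
  ultimately have "unit_vec i i = (0::'a)" by (rule vanishes_off_span_unit_vecs)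
  then show False by (simp add: unit_vec_def)
qed

definition recovery_weight ::
  "real \<Rightarrow> 'a::field array_code \<Rightarrow> nat \<Rightarrow> nat \<Rightarrow> nat \<Rightarrow> nat \<Rightarrow> real" where
  "recovery_weight q C t p c i =
     (if i \<in> column_recoverable C t p c then 1
      else if card (column_recoverable C t p c) = t then q else 1 - q)"

lemma recovery_weight_ge: "2 * q \<le> 1 \<Longrightarrow> q \<le> recovery_weight q C t p c i"
  by (simp add: recovery_weight_def)

lemma one_le_sum_recovery_weight:
  fixes C :: "'a::field array_code"
  assumes "finite S" "in_col_span C t p S i" "i < p" "1 \<le> 3 * q" "2 * q \<le> 1"
  shows "1 \<le> (\<Sum>c\<in>S. recovery_weight q C t p c i)"
proof -
  let ?w = "\<lambda>c. recovery_weight q C t p c i"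
  have lower: "q \<le> ?w c" for c using assms(5) by (rule recovery_weight_ge)
  have nonneg: "0 \<le> ?w c" for c using lower[of c] assms(4) by linarith
  show ?thesis
  proof (cases "\<exists>c\<in>S. i \<in> column_recoverable C t p c")
    case True
    then obtain c where c: "c \<in> S" "i \<in> column_recoverable C t p c" by blast
    then have "1 = ?w c" by (simp add: recovery_weight_def)
    also have "\<dots> \<le> (\<Sum>c\<in>S. ?w c)"
      using assms(1) c(1) nonneg by (intro member_le_sum) auto
    finally show ?thesis .
  next
    case False
    then have "\<not> card S \<le> 1"
      using recoverable_by_one_column assms(1-3) by blast
    then consider "card S = 2" | "3 \<le> card S" by linarith
    then show ?thesis
    proof cases
      case 1
      then obtain c c' where S: "S = {c, c'}" "c \<noteq> c'" by (auto simp: card_2_iff)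
      have "\<not> (card (column_recoverable C t p c) = t \<and> card (column_recoverable C t p c') = t)"
        using not_in_col_span_two_full_columns[of C t p c c' i] assms(2,3) False S by auto
      then have "?w c = 1 - q \<or> ?w c' = 1 - q"
        using False S by (auto simp: recovery_weight_def)
      moreover have "(\<Sum>c\<in>S. ?w c) = ?w c + ?w c'" using S by simp
      ultimately show ?thesis using lower[of c] lower[of c'] by linarith
    next
      case 2
      have "1 \<le> 3 * q" by (rule assms(4))
      also have "\<dots> \<le> real (card S) * q"
        using 2 assms(4) by (intro mult_right_mono) auto
      also have "\<dots> \<le> (\<Sum>c\<in>S. ?w c)" by (rule sum_bounded_below[OF lower])
      finally show ?thesis .
    qed
  qed
qed

lemma sum_recovery_weight_column_le:
  fixes C :: "'a::field array_code"
  assumes "0 \<le> q" "real d * (1 - 2 * q) \<le> q"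
  shows "(\<Sum>i<t + d. recovery_weight q C t (t + d) c i) \<le> real t + real d * q"
proof -
  let ?R = "column_recoverable C t (t + d) c"
  define r where "r = card ?R"
  define f where "f = (if r = t then q else 1 - q)"
  have R_sub: "?R \<subseteq> {..<t + d}" by (auto simp: column_recoverable_def)
  have "r \<le> t" unfolding r_def by (rule card_column_recoverable_le)
  have "(\<Sum>i<t + d. recovery_weight q C t (t + d) c i) = (\<Sum>i\<in>{..<t + d} - ?R. f) + (\<Sum>i\<in>?R. 1)"
    by (subst sum.subset_diff[OF R_sub], simp, intro arg_cong2[where f = "(+)"] sum.cong)
      (auto simp: recovery_weight_def f_def r_def)
  also have "\<dots> = real (t + d - r) * f + real r"
    using card_Diff_subset[OF finite_column_recoverable R_sub] by (simp add: r_def)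
  also have "\<dots> \<le> real t + real d * q"
  proof (cases "r = t")
    case True
    then show ?thesis by (simp add: f_def)
  next
    case False
    with \<open>r \<le> t\<close> have "real r * q \<le> (real t - 1) * q"
      using assms(1) by (intro mult_right_mono) auto
    moreover have "real (t + d - r) * f + real r = (real t + real d) * (1 - q) + real r * q"
      using \<open>r \<le> t\<close> False by (simp add: f_def of_nat_diff algebra_simps)
    ultimately show ?thesis using assms(2) by (simp add: algebra_simps)
  qed
  finally show ?thesis .
qed

lemma card_le_sum_recovery_weight:
  fixes C :: "'a::field array_code"
  assumes "is_pir_array_code C t m p k" "i < p" "1 \<le> 3 * q" "2 * q \<le> 1"
  shows "real k \<le> (\<Sum>c<m. recovery_weight q C t p c i)"
proof -
  let ?w = "\<lambda>c. recovery_weight q C t p c i"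
  from assms(1,2) obtain S where S_sub: "\<forall>j<k. S j \<subseteq> {..<m}"
    and S_disj: "\<forall>j<k. \<forall>j'<k. j \<noteq> j' \<longrightarrow> S j \<inter> S j' = {}"
    and S_rec: "\<forall>j<k. in_col_span C t p (S j) i"
    unfolding is_pir_array_code_def by auto
  have S_fin: "finite (S j)" if "j < k" for j
    using S_sub that finite_subset[of "S j" "{..<m}"] by simp
  have nonneg: "0 \<le> ?w c" for c
    using recovery_weight_ge[OF assms(4), of C t p c i] assms(3) by linarith
  have "real k = (\<Sum>j<k. 1)" by simp
  also have "\<dots> \<le> (\<Sum>j<k. \<Sum>c\<in>S j. ?w c)"
    using S_fin S_rec assms(2-4) by (intro sum_mono one_le_sum_recovery_weight) auto
  also have "\<dots> = (\<Sum>c\<in>(\<Union>j<k. S j). ?w c)"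
    using S_fin S_disj by (intro sum.UNION_disjoint[symmetric]) auto
  also have "\<dots> \<le> (\<Sum>c<m. ?w c)"
    using S_sub nonneg by (intro sum_mono2) auto
  finally show ?thesis .
qed

lemma pir_rate_double_counting:
  fixes C :: "'a::field array_code"
  assumes "is_pir_array_code C t m (t + d) k" "1 \<le> 3 * q" "2 * q \<le> 1" "real d * (1 - 2 * q) \<le> q"
  shows "real k * real (t + d) \<le> real m * (real t + real d * q)"
proof -
  let ?w = "\<lambda>c i. recovery_weight q C t (t + d) c i"
  have "real k * real (t + d) = (\<Sum>i<t + d. real k)" by simp
  also have "\<dots> \<le> (\<Sum>i<t + d. \<Sum>c<m. ?w c i)"
    using assms(1-3) by (intro sum_mono card_le_sum_recovery_weight) auto
  also have "\<dots> = (\<Sum>c<m. \<Sum>i<t + d. ?w c i)" by (rule sum.swap)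
  also have "\<dots> \<le> (\<Sum>c<m. real t + real d * q)"
    using assms(2,4) by (intro sum_mono sum_recovery_weight_column_le) auto
  finally show ?thesis by simp
qed

lemma pir_rate_le:
  fixes C :: "'a::field array_code"
  assumes "is_pir_array_code C t m (t + d) k" "0 < m" "1 \<le> d"
  shows "real k / real m \<le> real ((2*d+1)*t + d^2) / real ((t+d)*(2*d+1))"
proof -
  define q where "q = real d / (2 * real d + 1)"
  have "1 \<le> 3 * q" "2 * q \<le> 1" "real d * (1 - 2 * q) \<le> q"
    using assms(3) by (simp_all add: q_def field_simps)
  then have "real k * real (t + d) \<le> real m * (real t + real d * q)"
    by (rule pir_rate_double_counting[OF assms(1)])
  then have "real k / real m \<le> (real t + real d * q) / real (t + d)"
    using assms(2,3) by (simp add: field_simps)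
  also have "\<dots> = real ((2*d+1)*t + d^2) / real ((t+d)*(2*d+1))"
    by (simp add: q_def field_simps power2_eq_square)
  finally show ?thesis .
qed

definition uncoded_array :: "'a::field array_code" where
  "uncoded_array r c l = (if r = 0 \<and> l = c then 1 else 0)"

lemma in_col_span_uncoded:
  assumes "0 < t"
  shows "in_col_span (uncoded_array :: 'a::field array_code) t p {i} i"
proof -
  have "(\<Sum>r<t. (1::'a) * uncoded_array r i l) = (if l = i then 1 else 0)" for l
    using assms by (cases "l = i") (simp_all add: uncoded_array_def)
  then show ?thesis unfolding in_col_span_def by (intro exI[of _ "\<lambda>_ _. 1"]) simp
qed

lemma is_pir_array_code_uncoded:
  assumes "0 < t"
  shows "is_pir_array_code (uncoded_array :: 'a::field array_code) t p p 1"
  unfolding is_pir_array_code_def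
proof (intro allI impI)
  fix i assume "i < p"
  then show "\<exists>S :: nat \<Rightarrow> nat set. (\<forall>j<1. S j \<subseteq> {..<p}) \<and> (\<forall>j<1. \<forall>j'<1. j \<noteq> j' \<longrightarrow> S j \<inter> S j' = {}) \<and>
      (\<forall>j<1. in_col_span (uncoded_array :: 'a array_code) t p (S j) i)"
    using in_col_span_uncoded[OF assms] by (intro exI[of _ "\<lambda>_. {i}"]) (auto simp: less_one)
qed

theorem theorem4:
  fixes t d :: nat
  assumes "t \<ge> 2" and "d \<ge> 1"
  shows "pir_g TYPE('a::{finite,field}) (1 + of_nat d / of_nat t) t
           \<le> real ((2*d+1)*t + d^2) / real ((t+d)*(2*d+1))"
proof -
  have "(1 + of_nat d / of_nat t) * (of_nat t :: rat) = of_nat (t + d)"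
    using assms(1) by (simp add: field_simps)
  then have p: "nat \<lfloor>(1 + of_nat d / of_nat t) * (of_nat t :: rat)\<rfloor> = t + d"
    by (simp only: floor_of_nat nat_int)
  have uncoded: "is_pir_array_code (uncoded_array :: 'a array_code) t (t + d) (t + d) 1"
    using assms(1) by (intro is_pir_array_code_uncoded) simp
  define rates where "rates = {real k / real m |k m (C :: 'a array_code).
      0 < m \<and> 0 < k \<and> is_pir_array_code C t m (t + d) k}"
  have "real 1 / real (t + d) \<in> rates"
    unfolding rates_def using uncoded assms(2) by fastforce
  then have "Sup rates \<le> real ((2*d+1)*t + d^2) / real ((t+d)*(2*d+1))"
  proof (intro cSup_least)
    fix x assume "x \<in> rates"
    then obtain k m and C :: "'a array_code"
      where "x = real k / real m" "0 < m" "is_pir_array_code C t m (t + d) k"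
      unfolding rates_def by auto
    then show "x \<le> real ((2*d+1)*t + d^2) / real ((t+d)*(2*d+1))"
      using pir_rate_le assms(2) by simp
  qed auto
  then show ?thesis unfolding pir_g_def p rates_def .
qed

end
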